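(* Let $x\cdot y$ be a PA-structure on $(\mathfrak{g},\mathfrak{n})$, where $\mathfrak{g}$ and $\mathfrak{n}$ are $2$-step nilpotent. Then the product $x\circ y=\frac12(x\cdot y+y\cdot x)$ defines a CPA-structure on $\mathfrak{g}$ if and only if $$[L(x)+R(x),\mathrm{ad}(y)]=\mathrm{ad}(x\cdot y+y\cdot x)\quad\text{for all }x,y\in V.$$ (Equivalently, $x\cdot[y,z]+[y,z]\cdot x=[y,x\cdot z]+[y,z\cdot x]-[z,x\cdot y]-[z,y\cdot x]$ for all $x,y,z\in V$.)
   Context: Let $K$ be a field of characteristic zero and $V$ a finite-dimensional vector space over $K$. Let $\mathfrak{g}=(V,[\,,])$ and $\mathfrak{n}=(V,\{\,,\})$ be two Lie algebra structures on $V$. A post-Lie algebra structure (PA-structure) on the pair $(\mathfrak{g},\mathfrak{n})$ is a $K$-bilinear product $x\cdot y$ on $V$ satisfying, for all $x,y,z\in V$: (i) $x\cdot y-y\cdot x=[x,y]-\{x,y\}$; (ii) $[x,y]\cdot z=x\cdot(y\cdot z)-y\cdot(x\cdot z)$; (iii) $x\cdot\{y,z\}=\{x\cdot y,z\}+\{y,x\cdot z\}$. Write $L(x)(y)=x\cdot y$, $R(x)(y)=y\cdot x$, $\mathrm{ad}(x)(y)=[x,y]$; brackets of operators are commutators in $\mathrm{End}(V)$. A commutative post-Lie algebra structure (CPA-structure) on a Lie algebra $(V,[\,,])$ is a bilinear product $x\circ y$ on $V$ with $x\circ y=y\circ x$, $[x,y]\circ z=x\circ(y\circ z)-y\circ(x\circ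 z)$, and $x\circ[y,z]=[x\circ y,z]+[y,x\circ z]$ for all $x,y,z$. A Lie algebra is called $2$-step nilpotent here if it is nilpotent of class at most $2$, i.e. all brackets of the form $[[x,y],z]$ vanish. *)

theory Defs
  imports "HOL-Analysis.Analysis"
begin

text \<open>The vector space V is modelled as K^n, i.e. the type 'k ^ 'n with 'n finite
  and 'k a field of characteristic zero; scalar multiplication is (*s).\<close>

definition bilinear_map :: "('k::field ^ 'n \<Rightarrow> 'k ^ 'n \<Rightarrow> 'k ^ 'n) \<Rightarrow> bool" where
  "bilinear_map b \<longleftrightarrow>
     (\<forall>x y z. b (x + y) z = b x z + b y z) \<and>
     (\<forall>x y z. b x (y + z) = b x y + b x z) \<and>
     (\<forall>c x y. b (c *s x) y = c *s b x y) \<and>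
     (\<forall>c x y. b x (c *s y) = c *s b x y)"

definition lie_algebra :: "('k::field ^ 'n \<Rightarrow> 'k ^ 'n \<Rightarrow> 'k ^ 'n) \<Rightarrow> bool" where
  "lie_algebra br \<longleftrightarrow> bilinear_map br \<and>
     (\<forall>x. br x x = 0) \<and>
     (\<forall>x y z. br x (br y z) + br y (br z x) + br z (br x y) = 0)"

definition two_step_nilpotent :: "('k::field ^ 'n \<Rightarrow> 'k ^ 'n \<Rightarrow> 'k ^ 'n) \<Rightarrow> bool" where
  "two_step_nilpotent br \<longleftrightarrow> (\<forall>x y z. br (br x y) z = 0)"

text \<open>PA-structure x\<cdot>y = p x y on the pair (g, n) = (V, br), (V, nbr).\<close>
definition PA_structure ::
  "('k::field ^ 'n \<Rightarrow> 'k ^ 'n \<Rightarrow> 'k ^ 'n) \<Rightarrow> ('k ^ 'n \<Rightarrow> 'k ^ 'n \<Rightarrow> 'k ^ 'n)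
   \<Rightarrow> ('k ^ 'n \<Rightarrow> 'k ^ 'n \<Rightarrow> 'k ^ 'n) \<Rightarrow> bool" where
  "PA_structure br nbr p \<longleftrightarrow> bilinear_map p \<and>
     (\<forall>x y. p x y - p y x = br x y - nbr x y) \<and>
     (\<forall>x y z. p (br x y) z = p x (p y z) - p y (p x z)) \<and>
     (\<forall>x y z. p x (nbr y z) = nbr (p x y) z + nbr y (p x z))"

definition CPA_structure ::
  "('k::field ^ 'n \<Rightarrow> 'k ^ 'n \<Rightarrow> 'k ^ 'n) \<Rightarrow> ('k ^ 'n \<Rightarrow> 'k ^ 'n \<Rightarrow> 'k ^ 'n) \<Rightarrow> bool" where
  "CPA_structure br q \<longleftrightarrow> bilinear_map q \<and>
     (\<forall>x y. q x y = q y x) \<and>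
     (\<forall>x y z. q (br x y) z = q x (q y z) - q y (q x z)) \<and>
     (\<forall>x y z. q x (br y z) = br (q x y) z + br y (q x z))"

definition Lmul :: "('a \<Rightarrow> 'a \<Rightarrow> 'a) \<Rightarrow> 'a \<Rightarrow> 'a \<Rightarrow> 'a" where
  "Lmul p x = (\<lambda>y. p x y)"

definition Rmul :: "('a \<Rightarrow> 'a \<Rightarrow> 'a) \<Rightarrow> 'a \<Rightarrow> 'a \<Rightarrow> 'a" where
  "Rmul p x = (\<lambda>y. p y x)"

definition ad :: "('a \<Rightarrow> 'a \<Rightarrow> 'a) \<Rightarrow> 'a \<Rightarrow> 'a \<Rightarrow> 'a" where
  "ad br x = (\<lambda>y. br x y)"

definition opcomm :: "('a::ab_group_add \<Rightarrow> 'a) \<Rightarrow> ('a \<Rightarrow> 'a) \<Rightarrow> 'a \<Rightarrow> 'a" where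
  "opcomm A B = (\<lambda>v. A (B v) - B (A v))"

definition opadd :: "('a::ab_group_add \<Rightarrow> 'a) \<Rightarrow> ('a \<Rightarrow> 'a) \<Rightarrow> 'a \<Rightarrow> 'a" where
  "opadd A B = (\<lambda>v. A v + B v)"

end

theory Submission
  imports Defs
begin

text \<open>Write q(x,y) = x\<cdot>y + y\<cdot>x. For the product q/2, commutativity is free and the CPA
  derivation axiom is exactly the operator identity of the theorem, so everything hinges on the
  remaining axiom 2q([x,y],z) = q(x,q(y,z)) - q(y,q(x,z)) being a consequence of that identity.
  Expanding the right-hand side with the post-Lie axioms leaves terms [x,z]\<cdot>y and [y,z]\<cdot>x;
  as g is 2-step nilpotent, [x,z]\<cdot>y differs from y\<cdot>[x,z] only by {[x,z],y}, so the derivation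
  identity evaluates them, and what is left is a combination of n-brackets that cancels because
  n is 2-step nilpotent too.\<close>

lemma bilinear_map_simps:
  fixes b :: "'k::field ^ 'n \<Rightarrow> 'k ^ 'n \<Rightarrow> 'k ^ 'n"
  assumes "bilinear_map b"
  shows "b (x + y) z = b x z + b y z" "b x (y + z) = b x y + b x z"
    "b (c *s x) y = c *s b x y" "b x (c *s y) = c *s b x y"
    "b 0 y = 0" "b x 0 = 0" "b (- x) y = - b x y" "b x (- y) = - b x y"
    "b (x - y) z = b x z - b y z" "b x (y - z) = b x y - b x z"
proof -
  have add_left: "\<And>x y z. b (x + y) z = b x z + b y z"
    and add_right: "\<And>x y z. b x (y + z) = b x y + b x z"
    and scale_left: "\<And>c x y. b (c *s x) y = c *s b x y"
    and scale_right: "\<And>c x y. b x (c *s y) = c *s b x y"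
    using assms unfolding bilinear_map_def by blast+
  have neg_left: "\<And>x y. b (- x) y = - b x y"
    using scale_left[of "-1"] by (simp flip: vector_sneg_minus1)
  have neg_right: "\<And>x y. b x (- y) = - b x y"
    using scale_right[of _ "-1"] by (simp flip: vector_sneg_minus1)
  show "b (x + y) z = b x z + b y z" "b x (y + z) = b x y + b x z"
    "b (c *s x) y = c *s b x y" "b x (c *s y) = c *s b x y"
    "b (- x) y = - b x y" "b x (- y) = - b x y"
    by (fact add_left add_right scale_left scale_right neg_left neg_right)+
  show "b 0 y = 0" "b x 0 = 0"
    using scale_left[of 0 0 y] scale_right[of x 0 0] by simp_all
  show "b (x - y) z = b x z - b y z" "b x (y - z) = b x y - b x z"
    using add_left[of x "- y"] add_right[of x y "- z"] neg_left neg_right by simp_all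
qed

lemma lie_algebra_antisym:
  fixes br :: "'k::field ^ 'n \<Rightarrow> 'k ^ 'n \<Rightarrow> 'k ^ 'n"
  assumes "lie_algebra br"
  shows "br x y = - br y x"
proof -
  have bil: "bilinear_map br" and alt: "\<And>x. br x x = 0"
    using assms unfolding lie_algebra_def by auto
  have "br x y + br y x = br (x + y) (x + y) - br x x - br y y"
    by (simp add: bilinear_map_simps[OF bil])
  then show ?thesis
    by (simp add: alt eq_neg_iff_add_eq_0)
qed

definition symmetrized :: "('a::ab_group_add \<Rightarrow> 'a \<Rightarrow> 'a) \<Rightarrow> 'a \<Rightarrow> 'a \<Rightarrow> 'a" where
  "symmetrized p x y = p x y + p y x"

lemma symmetrized_commute: "symmetrized p x y = symmetrized p y x"
  by (simp add: symmetrized_def add.commute)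

lemma bilinear_map_symmetrized:
  fixes p :: "'k::field ^ 'n \<Rightarrow> 'k ^ 'n \<Rightarrow> 'k ^ 'n"
  assumes "bilinear_map p"
  shows "bilinear_map (symmetrized p)"
  unfolding bilinear_map_def symmetrized_def
  by (simp add: bilinear_map_simps[OF assms] algebra_simps)

lemma CPA_structure_scaled_iff:
  fixes br q :: "'k::field ^ 'n \<Rightarrow> 'k ^ 'n \<Rightarrow> 'k ^ 'n"
  assumes br: "bilinear_map br" and q: "bilinear_map q" and "c \<noteq> 0"
  shows "CPA_structure br (\<lambda>x y. c *s q x y) \<longleftrightarrow>
    (\<forall>x y. q x y = q y x) \<and>
    (\<forall>x y z. q (br x y) z = c *s (q x (q y z) - q y (q x z))) \<and>
    (\<forall>x y z. q x (br y z) = br (q x y) z + br y (q x z))"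
proof -
  have cancel: "c *s u = c *s v \<longleftrightarrow> u = v" for u v :: "'k ^ 'n"
    using \<open>c \<noteq> 0\<close> by simp
  have "bilinear_map (\<lambda>x y. c *s q x y)"
    unfolding bilinear_map_def
    by (simp add: bilinear_map_simps[OF q] mult.commute)
  moreover have assoc: "c *s q x (c *s q y z) - c *s q y (c *s q x z)
      = c *s (c *s (q x (q y z) - q y (q x z)))" for x y z
    by (simp add: bilinear_map_simps[OF q] vec.scale_right_diff_distrib)
  moreover have deriv: "br (c *s q x y) z + br y (c *s q x z) = c *s (br (q x y) z + br y (q x z))"
    for x y z
    by (simp add: bilinear_map_simps[OF br] vec.scale_right_distrib)
  ultimately show ?thesis
    unfolding CPA_structure_def by (simp only: assoc deriv cancel simp_thms)
qed

lemma opcomm_sum_mult_ad_iff: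
  "opcomm (opadd (Lmul p x) (Rmul p x)) (ad br y) = ad br (symmetrized p x y) \<longleftrightarrow>
    (\<forall>v. symmetrized p x (br y v) = br (symmetrized p x y) v + br y (symmetrized p x v))"
  by (simp add: opcomm_def opadd_def Lmul_def Rmul_def ad_def symmetrized_def fun_eq_iff
      diff_eq_eq add.commute)

lemma PA_symmetrized_bracket_left:
  fixes br nbr p :: "'k::field ^ 'n \<Rightarrow> 'k ^ 'n \<Rightarrow> 'k ^ 'n"
  assumes lie_br: "lie_algebra br" and lie_nbr: "lie_algebra nbr"
    and nil_br: "two_step_nilpotent br" and nil_nbr: "two_step_nilpotent nbr"
    and PA: "PA_structure br nbr p"
    and deriv: "\<And>a b c. symmetrized p a (br b c) = br (symmetrized p a b) c + br b (symmetrized p a c)"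
  shows "2 *s symmetrized p (br x y) z
    = symmetrized p x (symmetrized p y z) - symmetrized p y (symmetrized p x z)"
proof -
  have p_comm: "\<And>a b. p a b - p b a = br a b - nbr a b"
    and p_lie: "\<And>a b c. p (br a b) c = p a (p b c) - p b (p a c)"
    and p_der: "\<And>a b c. p a (nbr b c) = nbr (p a b) c + nbr b (p a c)"
    and bil_p: "bilinear_map p"
    using PA unfolding PA_structure_def by auto
  have bil_br: "bilinear_map br" and bil_nbr: "bilinear_map nbr"
    using lie_br lie_nbr unfolding lie_algebra_def by auto
  note bil = bilinear_map_simps[OF bil_p] bilinear_map_simps[OF bil_br]
    bilinear_map_simps[OF bil_nbr]
  define q where "q = symmetrized p"
  define S T U where "S = q y z" and "T = q x z" and "U = q x y"
  have nbr_eq: "\<And>a b. nbr a b = br a b - p a b + p b a"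
    using p_comm by (simp add: algebra_simps)
  have q_comm: "\<And>a b. q a b = q b a"
    unfolding q_def by (rule symmetrized_commute)
  have sym_x: "q x S = (p x S + p x S) + br S x - nbr S x"
    using p_comm[of S x] by (simp add: q_def symmetrized_def algebra_simps)
  have sym_y: "q y T = (p y T + p y T) + br T y - nbr T y"
    using p_comm[of T y] by (simp add: q_def symmetrized_def algebra_simps)
  have expand: "p x S - p y T = q (br x y) z + p (br x z) y - p (br y z) x - p z (nbr x y)"
    by (simp add: S_def T_def q_def symmetrized_def p_lie nbr_eq bil algebra_simps)
  have double_bracket_mult: "p (br a c) b + p (br a c) b
      = br a (q b c) + br (q a b) c - nbr (br a c) b" for a b c
  proof -
    have "q b (br a c) = br a (q b c) + br (q a b) c"
      using deriv[of b a c] q_comm[of b a] by (simp add: q_def add.commute)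
    moreover have "p b (br a c) = p (br a c) b + nbr (br a c) b"
      using p_comm[of "br a c" b] nil_br by (simp add: two_step_nilpotent_def algebra_simps)
    ultimately show ?thesis
      by (simp add: q_def symmetrized_def eq_diff_eq add.commute add.left_commute)
  qed
  have nbr_term: "nbr (br y z) x - nbr (br x z) y - (p z (nbr x y) + p z (nbr x y))
      - nbr S x + nbr T y = 0"
  proof -
    have "br y z = p y z - p z y + nbr y z" "br x z = p x z - p z x + nbr x z"
      using p_comm by (simp_all add: algebra_simps)
    moreover have "nbr x (p z y) = - nbr (p z y) x"
      by (rule lie_algebra_antisym[OF lie_nbr])
    ultimately show ?thesis
      using nil_nbr
      by (simp add: S_def T_def q_def symmetrized_def p_der bil two_step_nilpotent_def)
  qed
  have "q x S - q y T = (p x S - p y T) + (p x S - p y T) + (br S x - br T y) - (nbr S x - nbr T y)"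
    unfolding sym_x sym_y by (simp add: algebra_simps)
  also have "\<dots> = (q (br x y) z + q (br x y) z)
      + (p (br x z) y + p (br x z) y) - (p (br y z) x + p (br y z) x)
      - (p z (nbr x y) + p z (nbr x y)) + (br S x - br T y) - (nbr S x - nbr T y)"
    unfolding expand by (simp add: algebra_simps)
  also have "\<dots> = (q (br x y) z + q (br x y) z) + (br x S + br S x) - (br y T + br T y)
      + (nbr (br y z) x - nbr (br x z) y - (p z (nbr x y) + p z (nbr x y)) - nbr S x + nbr T y)"
    unfolding double_bracket_mult U_def[symmetric] S_def[symmetric] T_def[symmetric] q_comm[of y x]
    by (simp add: algebra_simps)
  also have "\<dots> = q (br x y) z + q (br x y) z"
    unfolding nbr_term using lie_algebra_antisym[OF lie_br, of x S]
      lie_algebra_antisym[OF lie_br, of y T] by simp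
  finally show ?thesis
    by (simp add: q_def S_def T_def vec_eq_iff)
qed

theorem proposition4p3:
  fixes br nbr p :: "'k::field_char_0 ^ 'n \<Rightarrow> 'k ^ 'n \<Rightarrow> 'k ^ 'n"
  assumes "lie_algebra br" and "lie_algebra nbr"
    and "two_step_nilpotent br" and "two_step_nilpotent nbr"
    and "PA_structure br nbr p"
  shows "CPA_structure br (\<lambda>x y. (1/2) *s (p x y + p y x)) \<longleftrightarrow>
    (\<forall>x y. opcomm (opadd (Lmul p x) (Rmul p x)) (ad br y) = ad br (p x y + p y x))"
proof -
  have bil_br: "bilinear_map br" and bil_p: "bilinear_map p"
    using assms(1,5) unfolding lie_algebra_def PA_structure_def by auto
  have lie_action: "symmetrized p (br x y) z
      = (1/2) *s (symmetrized p x (symmetrized p y z) - symmetrized p y (symmetrized p x z))"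
    if "\<And>a b c. symmetrized p a (br b c) = br (symmetrized p a b) c + br b (symmetrized p a c)"
    for x y z
    using arg_cong[OF PA_symmetrized_bracket_left[OF assms that, of x y z], of "(*s) (1/2)"]
    by simp
  have "CPA_structure br (\<lambda>x y. (1/2) *s symmetrized p x y) \<longleftrightarrow>
      (\<forall>x y z. symmetrized p x (br y z) = br (symmetrized p x y) z + br y (symmetrized p x z))"
    using CPA_structure_scaled_iff[OF bil_br bilinear_map_symmetrized[OF bil_p], of "1/2"]
      symmetrized_commute lie_action by auto
  then show ?thesis
    unfolding opcomm_sum_mult_ad_iff[symmetric] by (simp add: symmetrized_def)
qed

end
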